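(* Let $\psi\in\mathcal K$ have radius of convergence $R_\psi>0$ and let $g$ be the solution of Lagrange's equation $g(z)=z\psi(g(z))$. For $t\in(0,R_\psi)$ put $\psi_t(z)=\psi(tz)/\psi(t)$ and let $g_t$ be the power series solving $g_t(z)=z\psi_t(g_t(z))$. Then for $t\in(0,R_\psi)$, $$g_t(z)=\frac{g(tz/\psi(t))}{t}\qquad\text{for all }|z|\le1.$$ The holomorphic function $g_t$ is continuous on $\partial\mathbb D$ and satisfies $g_t(\mathbb D)\subset\mathbb D$. Moreover, $g_t$ is the probability generating function of $Z_{t/\psi(t)}$ whenever either $\psi\in\mathcal K^\star$ and $t\in[0,\tau]$, or $\psi\in\mathcal K\setminus\mathcal K^\star$ and $t\in(0,R_\psi)$, where $(Z_s)$ is the Khinchin family of $g$.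
   Context: $\mathcal K$ is the class of non-constant power series $f(z)=\sum_{n\ge0}a_nz^n$ with positive radius of convergence $R$, non-negative coefficients and $a_0>0$; its Khinchin family $(X_t)$ is given by $\mathbf P(X_t=n)=a_nt^n/f(t)$ ($n\ge0$, $t\in(0,R)$), $X_0\equiv 0$, with mean $m_f(t)=tf'(t)/f(t)$; thus $\psi_t$ is the probability generating function of the Khinchin family variable $Y_t$ of $\psi$. For $t=0$ one sets $\psi_0\equiv1$ and $g_0(z)=z$. $\mathcal K^\star$ is the subclass with $\lim_{t\uparrow R}m_f(t)>1$, with apex $\tau$ the unique point where $m_\psi(\tau)=1$. The solution $g(z)=\sum_{n\ge1}A_nz^n$ of Lagrange's equation has non-negative coefficients, $A_1=\psi(0)$; for $\psi\in\mathcal K^\star$ its radius of convergence is $\rho=\tau/\psi(\tau)$, it converges on the closed disk $\overline{\mathbb D(0,\rho)}$ and $g(\rho)=\tau$. The Khinchin family $(Z_s)$ of $g$ is $\mathbf P(Z_s=n)=A_ns^n/g(s)$, $n\ge1$ (including $s=\rho$ when $\psi\in\mathcal K^\star$; $Z_0$ is the point mass at $1$). $\mathbb D$ is the open unit disk. *)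

theory Defs
  imports "HOL-Analysis.Analysis" "HOL-Computational_Algebra.Formal_Power_Series"
begin

definition ps_eval :: "(nat \<Rightarrow> real) \<Rightarrow> 'a::{real_normed_field,banach} \<Rightarrow> 'a" where
  "ps_eval c x = (\<Sum>n. of_real (c n) * x ^ n)"

definition in_K :: "(nat \<Rightarrow> real) \<Rightarrow> bool" where
  "in_K a \<longleftrightarrow> (\<forall>n. a n \<ge> 0) \<and> a 0 > 0 \<and> (\<exists>n>0. a n \<noteq> 0) \<and> conv_radius a > 0"

definition kh_mean :: "(nat \<Rightarrow> real) \<Rightarrow> real \<Rightarrow> real" where
  "kh_mean a t = t * deriv (\<lambda>x::real. ps_eval a x) t / ps_eval a t"

definition R_filter :: "(nat \<Rightarrow> real) \<Rightarrow> real filter" where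
  "R_filter a = (if conv_radius a = \<infinity> then at_top else at_left (real_of_ereal (conv_radius a)))"

definition K_star :: "(nat \<Rightarrow> real) \<Rightarrow> bool" where
  "K_star a \<longleftrightarrow> in_K a \<and> Lim (R_filter a) (\<lambda>t. ereal (kh_mean a t)) > 1"

definition lagrange_sol :: "(nat \<Rightarrow> real) \<Rightarrow> real fps" where
  "lagrange_sol c = (THE G. fps_nth G 0 = 0 \<and> G = fps_X * fps_compose (Abs_fps c) G)"

definition psi_t :: "(nat \<Rightarrow> real) \<Rightarrow> real \<Rightarrow> nat \<Rightarrow> real" where
  "psi_t a t = (\<lambda>n. a n * t ^ n / ps_eval a t)"

definition kh_prob_g :: "(nat \<Rightarrow> real) \<Rightarrow> real \<Rightarrow> nat \<Rightarrow> real" where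
  "kh_prob_g A s n = (if s = 0 then (if n = 1 then 1 else 0) else A n * s ^ n / ps_eval A s)"

end

theory Submission
  imports Defs "HOL-Computational_Algebra.Polynomial_FPS"
begin

(* The solution g of g = z psi(g) is the compositional inverse of z/psi(z). Rescaling,
   g_t(z) = g(s z)/t with s = t/psi(t) solves the equation for psi_t, so the coefficients of g_t
   are A_n s^n/t. Comparing the polynomial truncations of g coefficientwise with the right-hand
   side of Lagrange's equation shows that g(s) converges with g(s) <= t and g(s) = s psi(g(s)),
   also when s lies on the circle of convergence. Thus g_t has non-negative coefficients of total
   mass g(s)/t <= 1, which gives its behaviour on the closed unit disk.
   The function x/psi(x) has derivative (1 - m(x))/psi(x), m the Khinchin mean, so it is
   injective on (0,t] as long as m < 1 on (0,t). Since m is strictly increasing, this holds for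
   t <= tau, and for every t when psi is not in K*; then g(s) = t, i.e. the coefficients of g_t
   are exactly the probabilities P(Z_s = n). *)

no_notation vec_nth (infixl \<open>$\<close> 90)
unbundle fps_syntax

section \<open>Coefficients of powers of formal power series\<close>

lemma fps_power_nth_nonneg:
  fixes F :: "'a::linordered_semidom fps"
  assumes "\<And>k. k \<le> n \<Longrightarrow> 0 \<le> F $ k"
  shows "0 \<le> (F ^ i) $ n"
  using assms
proof (induction i arbitrary: n)
  case (Suc i)
  then show ?case by (auto simp: fps_mult_nth intro!: sum_nonneg)
qed simp

lemma fps_power_nth_mono:
  fixes F G :: "'a::linordered_semidom fps"
  assumes "\<And>k. 0 \<le> F $ k" "\<And>k. F $ k \<le> G $ k"
  shows "(F ^ i) $ n \<le> (G ^ i) $ n"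
proof (induction i arbitrary: n)
  case (Suc i)
  have G_nonneg: "0 \<le> G $ k" for k using assms order_trans by blast
  show ?case
    using Suc assms G_nonneg fps_power_nth_nonneg[of _ F i]
    by (auto simp: fps_mult_nth intro!: sum_mono mult_mono)
qed simp

lemma fps_cutoff_power_nth:
  assumes "k < n"
  shows "(fps_cutoff n F ^ i) $ k = (F ^ i) $ k"
  using assms
proof (induction i arbitrary: k)
  case (Suc i)
  have "fps_cutoff (Suc k) (fps_cutoff n F ^ i) = fps_cutoff (Suc k) (F ^ i)"
    using Suc by (simp add: fps_cutoff_eq_fps_cutoff_iff)
  then have "(F * fps_cutoff n F ^ i) $ k = (F * F ^ i) $ k"
    by (metis fps_cutoff_right_mult_nth lessI)
  then show ?case
    using Suc.prems by (simp add: fps_cutoff_left_mult_nth)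
qed simp

lemma fps_power_nth_scale:
  fixes F G :: "'a::comm_semiring_1 fps"
  assumes "\<And>k. G $ k = \<alpha> * \<beta> ^ k * F $ k"
  shows "(G ^ i) $ n = \<alpha> ^ i * \<beta> ^ n * (F ^ i) $ n"
proof (induction i arbitrary: n)
  case (Suc i)
  have "(G ^ Suc i) $ n = (\<Sum>j=0..n. G $ j * (G ^ i) $ (n - j))"
    by (simp add: fps_mult_nth)
  also have "\<dots> = (\<Sum>j=0..n. \<alpha> ^ Suc i * \<beta> ^ n * (F $ j * (F ^ i) $ (n - j)))"
  proof (rule sum.cong)
    fix j assume "j \<in> {0..n}"
    then have "\<beta> ^ n = \<beta> ^ j * \<beta> ^ (n - j)" by (simp flip: power_add)
    then show "G $ j * (G ^ i) $ (n - j) = \<alpha> ^ Suc i * \<beta> ^ n * (F $ j * (F ^ i) $ (n - j))"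
      using Suc assms by (simp add: algebra_simps)
  qed simp
  also have "\<dots> = \<alpha> ^ Suc i * \<beta> ^ n * (F ^ Suc i) $ n"
    by (simp add: fps_mult_nth sum_distrib_left)
  finally show ?case .
qed simp

section \<open>Real power series with non-negative coefficients\<close>

lemma ps_eval_real: "ps_eval c (x::real) = (\<Sum>n. c n * x ^ n)"
  by (simp add: ps_eval_def)

lemma poly_truncate_fps:
  fixes F :: "'a::comm_semiring_1 fps"
  shows "poly (truncate_fps n F) x = (\<Sum>k<n. F $ k * x ^ k)"
proof (cases n)
  case (Suc m)
  have "poly (truncate_fps n F) x = (\<Sum>k\<le>m. coeff (truncate_fps n F) k * x ^ k)"
    unfolding poly_altdef using degree_truncate_fps[of n F] Suc
    by (intro sum.mono_neutral_left) (auto intro: le_degree)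
  then show ?thesis using Suc by (simp add: lessThan_Suc_atMost)
qed simp

lemma poly_le_poly_coeffwise:
  fixes p q :: "real poly"
  assumes "\<And>n. coeff p n \<le> coeff q n" "0 \<le> x"
  shows "poly p x \<le> poly q x"
proof -
  define D where "D = max (degree p) (degree q)"
  have "poly r x = (\<Sum>i\<le>D. coeff r i * x ^ i)" if "degree r \<le> D" for r :: "real poly"
    unfolding poly_altdef using that
    by (intro sum.mono_neutral_left) (auto simp: coeff_eq_0)
  then show ?thesis
    using assms by (simp add: D_def sum_mono mult_right_mono)
qed

lemma poly_le_suminf_coeffwise:
  fixes p :: "real poly"
  assumes "\<And>n. coeff p n \<le> A n" "\<And>n. 0 \<le> A n" "0 \<le> x" "summable (\<lambda>n. A n * x ^ n)"
  shows "poly p x \<le> (\<Sum>n. A n * x ^ n)"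
proof -
  have "poly p x \<le> (\<Sum>i\<le>degree p. A i * x ^ i)"
    unfolding poly_altdef using assms by (intro sum_mono mult_right_mono) auto
  also have "\<dots> \<le> (\<Sum>n. A n * x ^ n)"
    using assms by (intro sum_le_suminf) auto
  finally show ?thesis .
qed

lemma mult_powr_mono:
  fixes r u v :: real
  assumes "0 < u" "u \<le> v"
  shows "r * u powr r \<le> r * v powr r"
proof (cases "0 \<le> r")
  case True
  then show ?thesis using assms by (intro mult_left_mono powr_mono2) auto
next
  case False
  then show ?thesis using assms by (intro mult_left_mono_neg powr_mono2') auto
qed

lemma mult_powr_strict_mono:
  fixes r u v :: real
  assumes "0 < u" "u < v" "r \<noteq> 0"
  shows "r * u powr r < r * v powr r"
proof (cases "0 < r")
  case True
  then show ?thesis using assms by (intro mult_strict_left_mono powr_less_mono2) auto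
next
  case False
  then show ?thesis using assms by (intro mult_strict_left_mono_neg powr_less_mono2_neg) auto
qed

lemma power_series_mono:
  fixes c :: "nat \<Rightarrow> real"
  assumes "\<And>n. 0 \<le> c n" "0 \<le> y" "y \<le> t" "summable (\<lambda>n. c n * t ^ n)"
  shows "summable (\<lambda>n. c n * y ^ n)" "(\<Sum>n. c n * y ^ n) \<le> (\<Sum>n. c n * t ^ n)"
proof -
  have le: "c n * y ^ n \<le> c n * t ^ n" for n
    using assms by (intro mult_left_mono power_mono) auto
  show summable: "summable (\<lambda>n. c n * y ^ n)"
    using assms le by (intro summable_comparison_test'[OF assms(4), of 0]) auto
  show "(\<Sum>n. c n * y ^ n) \<le> (\<Sum>n. c n * t ^ n)"
    by (rule suminf_le[OF le summable assms(4)])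
qed

context
  fixes b :: "nat \<Rightarrow> real"
  assumes b_summable: "summable b" and b_nonneg: "\<And>n. 0 \<le> b n"
begin

lemma norm_power_series_le:
  fixes z :: "'a::{real_normed_field,banach}"
  assumes "norm z \<le> 1"
  shows "norm (of_real (b n) * z ^ n) \<le> b n"
proof -
  have "norm z ^ n \<le> 1" using assms by (simp add: power_le_one)
  then show ?thesis using b_nonneg[of n] by (simp add: norm_mult norm_power mult_left_le)
qed

lemma sums_ps_eval_cball:
  fixes z :: "'a::{real_normed_field,banach}"
  assumes "norm z \<le> 1"
  shows "(\<lambda>n. of_real (b n) * z ^ n) sums ps_eval b z"
proof -
  have "summable (\<lambda>n. norm (of_real (b n) * z ^ n))"
    using norm_power_series_le[OF assms] by (intro summable_comparison_test'[OF b_summable, of 0]) simp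
  then have "summable (\<lambda>n. of_real (b n) * z ^ n)"
    by (rule summable_norm_cancel)
  then show ?thesis by (simp add: ps_eval_def summable_sums)
qed

lemma holomorphic_on_ps_eval_ball: "(\<lambda>z::complex. ps_eval b z) holomorphic_on ball 0 1"
proof -
  have "((\<lambda>z. \<Sum>n. of_real (b n) * z ^ n) has_field_derivative
          (\<Sum>n. diffs (\<lambda>n. of_real (b n)) n * z ^ n)) (at z)" if "norm z < 1" for z :: complex
    using sums_summable[OF sums_ps_eval_cball[where 'a = complex]] that
    by (intro termdiffs_strong'[of 1]) auto
  then show ?thesis
    unfolding ps_eval_def[abs_def] holomorphic_on_open[OF open_ball] by (metis mem_ball_0)
qed

lemma continuous_on_ps_eval_cball: "continuous_on (cball 0 1) (\<lambda>z::complex. ps_eval b z)"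
  unfolding ps_eval_def[abs_def]
proof (rule uniform_limit_theorem[OF _ Weierstrass_m_test[OF _ b_summable]])
  show "\<forall>\<^sub>F n in sequentially. continuous_on (cball 0 1) (\<lambda>z::complex. \<Sum>i<n. of_real (b i) * z ^ i)"
    by (intro always_eventually allI continuous_intros)
qed (auto intro: norm_power_series_le)

lemma ps_eval_ball_subset:
  assumes "suminf b \<le> 1" "0 < k" "0 < b k"
  shows "(\<lambda>z::complex. ps_eval b z) ` ball 0 1 \<subseteq> ball 0 1"
proof (rule image_subsetI)
  fix z :: complex assume "z \<in> ball 0 1"
  then have z: "norm z < 1" by simp
  have term_le: "b n * norm z ^ n \<le> b n" for n
    using b_nonneg[of n] z by (simp add: power_le_one mult_left_le)
  have summable: "summable (\<lambda>n. b n * norm z ^ n)"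
    using b_nonneg term_le by (intro summable_comparison_test'[OF b_summable, of 0]) simp
  have "norm (ps_eval b z) \<le> (\<Sum>n. norm (of_real (b n) * z ^ n))"
    unfolding ps_eval_def using summable b_nonneg
    by (intro summable_norm) (simp add: norm_mult norm_power)
  also have "\<dots> = (\<Sum>n. b n * norm z ^ n)"
    using b_nonneg by (simp add: norm_mult norm_power)
  also have "\<dots> < suminf b"
  proof -
    have "b k * norm z ^ k < b k"
      using assms(2,3) z by (simp add: power_less_one_iff)
    then have "0 < (\<Sum>n. b n - b n * norm z ^ n)"
      using term_le by (intro suminf_pos2[where i = k] summable_diff b_summable summable) auto
    also have "\<dots> = suminf b - (\<Sum>n. b n * norm z ^ n)"
      by (rule suminf_diff[OF b_summable summable, symmetric])
    finally show ?thesis by simp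
  qed
  finally show "ps_eval b z \<in> ball 0 1"
    using assms(1) by simp
qed

end

section \<open>Lagrange's equation\<close>

lemma lagrange_equation_iff_fps_inv:
  fixes C G :: "'a::field fps"
  assumes C0: "C $ 0 \<noteq> 0"
  shows "G $ 0 = 0 \<and> G = fps_X * (C oo G) \<longleftrightarrow> G = fps_inv (fps_X * inverse C)"
proof -
  define F where "F = fps_X * inverse C"
  have F0: "F $ 0 = 0" and F1: "F $ 1 \<noteq> 0" using C0 by (simp_all add: F_def)
  have F_oo: "F oo H = H * inverse (C oo H)" if "H $ 0 = 0" for H
    using that C0 by (simp add: F_def fps_compose_mult_distrib fps_inverse_compose)
  have C_oo_inv: "(C oo H) * inverse (C oo H) = 1" for H
    using C0 by (intro inverse_mult_eq_1') simp
  show ?thesis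
  proof
    assume G: "G $ 0 = 0 \<and> G = fps_X * (C oo G)"
    then have "F oo G = fps_X * ((C oo G) * inverse (C oo G))"
      using F_oo[of G] by (metis mult.assoc)
    then have FG: "F oo G = fps_X" by (simp add: C_oo_inv)
    have "G = (fps_inv F oo F) oo G" using G F0 F1 by (simp add: fps_inv)
    also have "\<dots> = fps_inv F" using G F0 by (simp add: fps_compose_assoc[symmetric] FG)
    finally show "G = fps_inv (fps_X * inverse C)" by (simp add: F_def)
  next
    assume G: "G = fps_inv (fps_X * inverse C)"
    then have G0: "G $ 0 = 0" by (simp add: fps_inv_def)
    have "G * inverse (C oo G) = fps_X"
      using fps_inv_right[OF F0 F1] F_oo[OF G0] by (simp add: G F_def)
    then have "fps_X * (C oo G) = G * ((C oo G) * inverse (C oo G))"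
      by (simp add: mult_ac)
    then have "G = fps_X * (C oo G)" by (simp add: C_oo_inv)
    with G0 show "G $ 0 = 0 \<and> G = fps_X * (C oo G)" by simp
  qed
qed

lemma lagrange_sol_eq_fps_inv:
  assumes "c 0 \<noteq> 0"
  shows "lagrange_sol c = fps_inv (fps_X * inverse (Abs_fps c))"
  unfolding lagrange_sol_def
  using lagrange_equation_iff_fps_inv[of "Abs_fps c"] assms by (intro the_equality) auto

lemma lagrange_sol_unique:
  assumes "c 0 \<noteq> 0" "G $ 0 = 0" "G = fps_X * (Abs_fps c oo G)"
  shows "lagrange_sol c = G"
  using lagrange_equation_iff_fps_inv[of "Abs_fps c" G] assms by (simp add: lagrange_sol_eq_fps_inv)

lemma lagrange_sol_equation:
  assumes "c 0 \<noteq> 0"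
  shows "lagrange_sol c $ 0 = 0" "lagrange_sol c = fps_X * (Abs_fps c oo lagrange_sol c)"
  using lagrange_equation_iff_fps_inv[of "Abs_fps c" "lagrange_sol c"] assms
  by (simp_all add: lagrange_sol_eq_fps_inv)

lemma lagrange_sol_nth_Suc:
  assumes "c 0 \<noteq> 0"
  shows "lagrange_sol c $ Suc n = (\<Sum>i=0..n. c i * (lagrange_sol c ^ i) $ n)"
  by (subst lagrange_sol_equation(2)[of c, OF assms]) (simp add: fps_compose_nth)

lemma lagrange_sol_nonneg:
  assumes "\<And>n. 0 \<le> c n" "c 0 \<noteq> 0"
  shows "0 \<le> lagrange_sol c $ n"
proof (induction n rule: less_induct)
  case (less n)
  show ?case
  proof (cases n)
    case (Suc m)
    then have "0 \<le> (lagrange_sol c ^ i) $ m" for i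
      using less by (intro fps_power_nth_nonneg) auto
    then show ?thesis
      using Suc assms by (simp add: lagrange_sol_nth_Suc sum_nonneg)
  qed (simp add: lagrange_sol_equation(1) assms)
qed

lemma lagrange_sol_scale:
  fixes c :: "nat \<Rightarrow> real"
  assumes "c 0 \<noteq> 0" "p \<noteq> 0" "t \<noteq> 0"
  shows "lagrange_sol (\<lambda>n. c n * t ^ n / p) $ n = lagrange_sol c $ n * (t / p) ^ n / t"
proof -
  define G where "G = lagrange_sol c"
  define H where "H = Abs_fps (\<lambda>n. G $ n * (t / p) ^ n / t)"
  have H_power: "(H ^ i) $ n = (1 / t) ^ i * (t / p) ^ n * (G ^ i) $ n" for i n
    by (rule fps_power_nth_scale) (simp add: H_def)
  have "H = fps_X * (Abs_fps (\<lambda>n. c n * t ^ n / p) oo H)"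
  proof (rule fps_ext)
    fix n
    show "H $ n = (fps_X * (Abs_fps (\<lambda>n. c n * t ^ n / p) oo H)) $ n"
    proof (cases n)
      case 0
      then show ?thesis
        using lagrange_sol_equation(1)[of c] assms(1) by (simp add: H_def G_def)
    next
      case (Suc m)
      have "(\<Sum>i=0..m. c i * t ^ i / p * (H ^ i) $ m) = (t / p) ^ m / p * (\<Sum>i=0..m. c i * (G ^ i) $ m)"
        using assms(3) by (simp add: H_power sum_distrib_left power_one_over field_simps)
      then show ?thesis
        using Suc assms lagrange_sol_nth_Suc[of c m]
        by (simp add: fps_compose_nth H_def G_def field_simps)
    qed
  qed
  then have "lagrange_sol (\<lambda>n. c n * t ^ n / p) = H"
    using assms by (intro lagrange_sol_unique) (simp_all add: H_def G_def lagrange_sol_equation(1)[of c])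
  then show ?thesis by (simp add: H_def G_def)
qed

definition lagrange_rhs :: "(nat \<Rightarrow> real) \<Rightarrow> nat \<Rightarrow> real poly \<Rightarrow> real poly" where
  "lagrange_rhs c M p = pCons 0 (\<Sum>k\<le>M. smult (c k) (p ^ k))"

lemma poly_lagrange_rhs: "poly (lagrange_rhs c M p) x = x * (\<Sum>k\<le>M. c k * poly p x ^ k)"
  by (simp add: lagrange_rhs_def poly_sum poly_power)

lemma coeff_lagrange_rhs:
  "coeff (lagrange_rhs c M p) 0 = 0"
  "coeff (lagrange_rhs c M p) (Suc m) = (\<Sum>k\<le>M. c k * (fps_of_poly p ^ k) $ m)"
  by (simp_all add: lagrange_rhs_def coeff_sum fps_of_poly_power[symmetric])

context
  fixes c :: "nat \<Rightarrow> real"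
  assumes c_nonneg: "\<And>n. 0 \<le> c n" and c0: "c 0 \<noteq> 0"
begin

lemma truncated_lagrange_sol_le_rhs:
  assumes "0 \<le> x"
  shows "poly (truncate_fps (Suc (Suc N)) (lagrange_sol c)) x
           \<le> x * (\<Sum>k\<le>N. c k * poly (truncate_fps (Suc N) (lagrange_sol c)) x ^ k)"
proof -
  define G where "G = lagrange_sol c"
  have G_nonneg: "0 \<le> G $ k" for k
    using lagrange_sol_nonneg[of c] c_nonneg c0 by (simp add: G_def)
  have "coeff (truncate_fps (Suc (Suc N)) G) n \<le> coeff (lagrange_rhs c N (truncate_fps (Suc N) G)) n"
    for n
  proof (cases n)
    case 0
    then show ?thesis by (simp add: coeff_lagrange_rhs G_def lagrange_sol_equation(1)[of c, OF c0])
  next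
    case (Suc m)
    have power_nonneg: "0 \<le> (fps_cutoff (Suc N) G ^ k) $ m" for k
      using G_nonneg by (intro fps_power_nth_nonneg) simp
    show ?thesis
    proof (cases "m \<le> N")
      case True
      have "coeff (truncate_fps (Suc (Suc N)) G) n = (\<Sum>k=0..m. c k * (G ^ k) $ m)"
        using Suc True by (simp add: G_def lagrange_sol_nth_Suc[of c, OF c0])
      also have "\<dots> = (\<Sum>k=0..m. c k * (fps_cutoff (Suc N) G ^ k) $ m)"
        using True by (simp add: fps_cutoff_power_nth)
      also have "\<dots> \<le> (\<Sum>k\<le>N. c k * (fps_cutoff (Suc N) G ^ k) $ m)"
        using True power_nonneg c_nonneg by (intro sum_mono2) auto
      finally show ?thesis by (simp add: Suc coeff_lagrange_rhs)
    next
      case False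
      then show ?thesis
        using Suc power_nonneg c_nonneg by (simp add: coeff_lagrange_rhs sum_nonneg)
    qed
  qed
  then have "poly (truncate_fps (Suc (Suc N)) G) x \<le> poly (lagrange_rhs c N (truncate_fps (Suc N) G)) x"
    using assms by (rule poly_le_poly_coeffwise)
  then show ?thesis by (simp add: poly_lagrange_rhs G_def)
qed

lemma truncated_lagrange_rhs_le_sum:
  assumes "0 \<le> x" "summable (\<lambda>n. lagrange_sol c $ n * x ^ n)"
  shows "x * (\<Sum>k\<le>M. c k * poly (truncate_fps N (lagrange_sol c)) x ^ k)
           \<le> (\<Sum>n. lagrange_sol c $ n * x ^ n)"
proof -
  define G where "G = lagrange_sol c"
  have G_nonneg: "0 \<le> G $ k" for k
    using lagrange_sol_nonneg[of c] c_nonneg c0 by (simp add: G_def)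
  have "coeff (lagrange_rhs c M (truncate_fps N G)) n \<le> G $ n" for n
  proof (cases n)
    case 0
    then show ?thesis by (simp add: coeff_lagrange_rhs G_nonneg)
  next
    case (Suc m)
    have "coeff (lagrange_rhs c M (truncate_fps N G)) n = (\<Sum>k\<le>M. c k * (fps_cutoff N G ^ k) $ m)"
      using Suc by (simp add: coeff_lagrange_rhs)
    also have "\<dots> \<le> (\<Sum>k\<le>M. c k * (G ^ k) $ m)"
      using c_nonneg G_nonneg by (intro sum_mono mult_left_mono fps_power_nth_mono) auto
    also have "\<dots> \<le> (\<Sum>k\<le>max M m. c k * (G ^ k) $ m)"
      using c_nonneg G_nonneg by (intro sum_mono2 mult_nonneg_nonneg fps_power_nth_nonneg) auto
    also have "\<dots> = (\<Sum>k=0..m. c k * (G ^ k) $ m)"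
      using startsby_zero_power_prefix[of G] lagrange_sol_equation(1)[of c, OF c0]
      by (intro sum.mono_neutral_right) (auto simp: G_def)
    also have "\<dots> = G $ n"
      using Suc by (simp add: G_def lagrange_sol_nth_Suc[of c, OF c0])
    finally show ?thesis .
  qed
  then have "poly (lagrange_rhs c M (truncate_fps N G)) x \<le> (\<Sum>n. G $ n * x ^ n)"
    using assms G_nonneg by (intro poly_le_suminf_coeffwise) (auto simp: G_def)
  then show ?thesis by (simp add: poly_lagrange_rhs G_def)
qed

lemma lagrange_sol_summable_le:
  assumes "0 \<le> s" "0 \<le> t" "summable (\<lambda>k. c k * t ^ k)" "s * (\<Sum>k. c k * t ^ k) \<le> t"
  shows "summable (\<lambda>n. lagrange_sol c $ n * s ^ n)" "(\<Sum>n. lagrange_sol c $ n * s ^ n) \<le> t"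
proof -
  define G where "G = lagrange_sol c"
  have G_nonneg: "0 \<le> G $ k" for k
    using lagrange_sol_nonneg[of c] c_nonneg c0 by (simp add: G_def)
  have truncation_le: "poly (truncate_fps (Suc N) G) s \<le> t" for N
  proof (induction N)
    case 0
    then show ?case
      using assms(2) by (simp add: poly_truncate_fps G_def lagrange_sol_equation(1)[of c, OF c0])
  next
    case (Suc N)
    define y where "y = poly (truncate_fps (Suc N) G) s"
    have y: "0 \<le> y" "y \<le> t"
      using assms(1) G_nonneg Suc unfolding y_def poly_truncate_fps by (simp_all add: sum_nonneg)
    note psi_y = power_series_mono[OF c_nonneg y assms(3)]
    have "poly (truncate_fps (Suc (Suc N)) G) s \<le> s * (\<Sum>k\<le>N. c k * y ^ k)"
      unfolding y_def G_def using assms(1) by (rule truncated_lagrange_sol_le_rhs)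
    also have "\<dots> \<le> s * (\<Sum>k. c k * y ^ k)"
      using assms(1) c_nonneg y psi_y(1) by (intro mult_left_mono sum_le_suminf) auto
    also have "\<dots> \<le> s * (\<Sum>k. c k * t ^ k)"
      using assms(1) psi_y(2) by (rule mult_left_mono[rotated])
    finally show ?case using assms(4) by simp
  qed
  then have partial_le: "(\<Sum>k\<le>N. G $ k * s ^ k) \<le> t" for N
    by (simp add: poly_truncate_fps lessThan_Suc_atMost)
  show summable: "summable (\<lambda>n. G $ n * s ^ n)"
    using partial_le G_nonneg assms(1) by (intro bounded_imp_summable[where B = t]) auto
  show "(\<Sum>n. G $ n * s ^ n) \<le> t"
    using summable_LIMSEQ'[OF summable] partial_le by (intro LIMSEQ_le_const2) auto
qed

lemma lagrange_sol_sum_le_rhs: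
  assumes "0 \<le> s" "summable (\<lambda>n. lagrange_sol c $ n * s ^ n)"
    and "summable (\<lambda>k. c k * (\<Sum>n. lagrange_sol c $ n * s ^ n) ^ k)"
  shows "(\<Sum>n. lagrange_sol c $ n * s ^ n) \<le> s * (\<Sum>k. c k * (\<Sum>n. lagrange_sol c $ n * s ^ n) ^ k)"
proof -
  define G where "G = lagrange_sol c"
  define g where "g = (\<Sum>n. G $ n * s ^ n)"
  define P where "P N = poly (truncate_fps (Suc N) G) s" for N
  have G_nonneg: "0 \<le> G $ k" for k
    using lagrange_sol_nonneg[of c] c_nonneg c0 by (simp add: G_def)
  have summable_G: "summable (\<lambda>n. G $ n * s ^ n)" and summable_psi: "summable (\<lambda>k. c k * g ^ k)"
    using assms by (simp_all add: G_def g_def)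
  have P: "0 \<le> P N" "P N \<le> g" for N
    unfolding P_def g_def poly_truncate_fps using assms(1) G_nonneg summable_G
    by (intro sum_nonneg sum_le_suminf; simp)+
  have "P N \<le> s * (\<Sum>k. c k * g ^ k)" for N
  proof (cases N)
    case 0
    have "0 \<le> g" using P(1)[of 0] P(2)[of 0] by linarith
    then have "0 \<le> (\<Sum>k. c k * g ^ k)"
      using c_nonneg by (intro suminf_nonneg summable_psi) simp
    then show ?thesis
      using 0 assms(1) by (simp add: P_def poly_truncate_fps G_def lagrange_sol_equation(1)[of c, OF c0])
  next
    case (Suc M)
    note psi_P = power_series_mono[OF c_nonneg P(1) P(2) summable_psi, of M]
    have "P N \<le> s * (\<Sum>k\<le>M. c k * P M ^ k)"
      unfolding P_def G_def Suc using assms(1) by (rule truncated_lagrange_sol_le_rhs)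
    also have "\<dots> \<le> s * (\<Sum>k. c k * P M ^ k)"
      using assms(1) c_nonneg P psi_P(1) by (intro mult_left_mono sum_le_suminf) auto
    also have "\<dots> \<le> s * (\<Sum>k. c k * g ^ k)"
      using assms(1) psi_P(2) by (rule mult_left_mono[rotated])
    finally show ?thesis .
  qed
  then have "g \<le> s * (\<Sum>k. c k * g ^ k)"
    using summable_LIMSEQ'[OF summable_G]
    by (intro LIMSEQ_le_const2) (auto simp: P_def g_def poly_truncate_fps lessThan_Suc_atMost)
  then show ?thesis by (simp add: g_def G_def)
qed

lemma lagrange_sol_rhs_le_sum:
  assumes "0 \<le> s" "summable (\<lambda>n. lagrange_sol c $ n * s ^ n)"
    and "summable (\<lambda>k. c k * (\<Sum>n. lagrange_sol c $ n * s ^ n) ^ k)"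
  shows "s * (\<Sum>k. c k * (\<Sum>n. lagrange_sol c $ n * s ^ n) ^ k) \<le> (\<Sum>n. lagrange_sol c $ n * s ^ n)"
proof -
  define G where "G = lagrange_sol c"
  define g where "g = (\<Sum>n. G $ n * s ^ n)"
  define P where "P N = poly (truncate_fps N G) s" for N
  have P_tendsto: "(\<lambda>N. P (Suc N)) \<longlonglongrightarrow> g"
    using summable_LIMSEQ'[OF assms(2)] by (simp add: P_def g_def G_def poly_truncate_fps lessThan_Suc_atMost)
  have "s * (\<Sum>k\<le>M. c k * g ^ k) \<le> g" for M
  proof -
    have "(\<lambda>N. s * (\<Sum>k\<le>M. c k * P (Suc N) ^ k)) \<longlonglongrightarrow> s * (\<Sum>k\<le>M. c k * g ^ k)"
      by (intro tendsto_intros P_tendsto)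
    moreover have "s * (\<Sum>k\<le>M. c k * P (Suc N) ^ k) \<le> g" for N
      unfolding P_def g_def G_def using assms(1,2) by (rule truncated_lagrange_rhs_le_sum)
    ultimately show ?thesis by (intro LIMSEQ_le_const2) auto
  qed
  moreover have "(\<lambda>M. s * (\<Sum>k\<le>M. c k * g ^ k)) \<longlonglongrightarrow> s * (\<Sum>k. c k * g ^ k)"
    using summable_LIMSEQ'[OF assms(3)] by (intro tendsto_intros) (simp add: g_def G_def)
  ultimately have "s * (\<Sum>k. c k * g ^ k) \<le> g"
    by (intro LIMSEQ_le_const2) auto
  then show ?thesis by (simp add: g_def G_def)
qed

lemma lagrange_sol_sum_fixpoint:
  assumes "0 \<le> s" "summable (\<lambda>n. lagrange_sol c $ n * s ^ n)"
    and "summable (\<lambda>k. c k * (\<Sum>n. lagrange_sol c $ n * s ^ n) ^ k)"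
  shows "(\<Sum>n. lagrange_sol c $ n * s ^ n) = s * (\<Sum>k. c k * (\<Sum>n. lagrange_sol c $ n * s ^ n) ^ k)"
  using lagrange_sol_sum_le_rhs[OF assms] lagrange_sol_rhs_le_sum[OF assms] by simp

end

section \<open>The Khinchin mean\<close>

lemma R_filter_nontrivial: "R_filter c \<noteq> bot"
  by (simp add: R_filter_def)

lemma eventually_R_filter:
  assumes "ereal w < conv_radius c"
  shows "eventually (\<lambda>x. w < x \<and> ereal x < conv_radius c) (R_filter c)"
proof (cases "conv_radius c")
  case (real r)
  then have "eventually (\<lambda>x. x \<in> {w<..<r}) (at_left r)"
    using assms by (intro eventually_at_left_real) simp
  then show ?thesis
    using real by (auto simp: R_filter_def elim: eventually_mono)
next
  case PInf
  then show ?thesis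
    using eventually_gt_at_top[of w] by (auto simp: R_filter_def elim: eventually_mono)
qed (use assms in simp)

context
  fixes a :: "nat \<Rightarrow> real"
  assumes a_in_K: "in_K a"
begin

lemma in_K_nonneg: "0 \<le> a n"
  using a_in_K by (simp add: in_K_def)

lemma in_K_coeff_0_pos: "0 < a 0"
  using a_in_K by (simp add: in_K_def)

lemma in_K_summable:
  "0 \<le> y \<Longrightarrow> ereal y < conv_radius a \<Longrightarrow> summable (\<lambda>n. a n * y ^ n)"
  using summable_in_conv_radius[of y a] by simp

lemma ps_eval_pos:
  assumes "0 \<le> y" "ereal y < conv_radius a"
  shows "0 < ps_eval a y"
  unfolding ps_eval_real
  using in_K_summable[OF assms] in_K_nonneg in_K_coeff_0_pos assms(1) by (intro suminf_pos2[where i = 0]) auto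

lemma ps_eval_sums:
  "0 \<le> w \<Longrightarrow> ereal w < conv_radius a \<Longrightarrow> (\<lambda>n. a n * w ^ n) sums ps_eval a w"
  using in_K_summable by (simp add: ps_eval_real summable_sums)

lemma ps_eval_derivative:
  assumes "0 < w" "ereal w < conv_radius a"
  defines "D \<equiv> (\<Sum>n. diffs a n * w ^ n)"
  shows "((\<lambda>x. ps_eval a x) has_real_derivative D) (at w)"
    and "(\<lambda>n. real n * a n * w ^ n) sums (w * D)"
proof -
  obtain K where K: "w < K" "ereal K < conv_radius a"
    using ereal_dense2[OF assms(2)] by auto
  have summable: "summable (\<lambda>n. a n * x ^ n)" if "norm x < K" for x :: real
    using that by (intro summable_in_conv_radius less_trans[OF _ K(2)]) simp
  show "((\<lambda>x. ps_eval a x) has_real_derivative D) (at w)"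
    unfolding ps_eval_real D_def using summable assms(1) K(1) by (intro termdiffs_strong') auto
  have "(\<lambda>n. of_nat n * a n * w ^ (n - Suc 0)) sums D"
    unfolding D_def using summable assms(1) K(1) by (intro diffs_equiv termdiff_converges[of w K]) auto
  from sums_mult[OF this, of w] show "(\<lambda>n. real n * a n * w ^ n) sums (w * D)"
    by (rule sums_cong[THEN iffD1, rotated]) (auto simp: power_eq_if)
qed

lemma sums_moment_kh_mean:
  assumes "0 < w" "ereal w < conv_radius a"
  shows "(\<lambda>n. real n * a n * w ^ n) sums (kh_mean a w * ps_eval a w)"
proof -
  have "deriv (\<lambda>x. ps_eval a x) w = (\<Sum>n. diffs a n * w ^ n)"
    using ps_eval_derivative(1)[OF assms] by (rule DERIV_imp_deriv)
  then show ?thesis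
    using ps_eval_derivative(2)[OF assms] ps_eval_pos[of w] assms by (simp add: kh_mean_def)
qed

lemma kh_mean_pos:
  assumes "0 < w" "ereal w < conv_radius a"
  shows "0 < kh_mean a w"
proof -
  obtain N where N: "N > 0" "a N \<noteq> 0" using a_in_K by (auto simp: in_K_def)
  have "0 < a N" using in_K_nonneg[of N] N(2) by simp
  then have "0 < (\<Sum>n. real n * a n * w ^ n)"
    using sums_summable[OF sums_moment_kh_mean[OF assms]] in_K_nonneg N(1) assms(1)
    by (intro suminf_pos2[where i = N]) auto
  then have "0 < kh_mean a w * ps_eval a w"
    using sums_moment_kh_mean[OF assms] by (simp add: sums_iff)
  then show ?thesis
    using ps_eval_pos[of w] assms by (simp add: zero_less_mult_iff)
qed

lemma kh_mean_strict_mono: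
  assumes "0 < u" "u < v" "ereal v < conv_radius a"
  shows "kh_mean a u < kh_mean a v"
proof -
  have u: "ereal u < conv_radius a"
    using assms by (intro le_less_trans[OF _ assms(3)]) simp
  have v: "0 < v" using assms by simp
  define l where "l = kh_mean a u"
  have l_pos: "0 < l" using kh_mean_pos[OF assms(1) u] by (simp add: l_def)
  (* T w n = a_n (n - l) w^(n - l) is non-decreasing in w for each n and strictly increasing for
     n = 0, while its sum over n is w^(-l) (m(w) - l) psi(w), which vanishes at w = u. *)
  define T where "T w n = w powr (-l) * (real n * a n * w ^ n - l * (a n * w ^ n))" for w n
  have T_sums: "T w sums (w powr (-l) * ((kh_mean a w - l) * ps_eval a w))"
    if "0 < w" "ereal w < conv_radius a" for w
    using sums_mult[OF sums_diff[OF sums_moment_kh_mean[OF that] sums_mult[OF ps_eval_sums, of w l]],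
        of "w powr (-l)"] that
    by (simp add: T_def[abs_def] algebra_simps)
  have T_u: "T u sums 0"
    using T_sums[OF assms(1) u] by (simp add: l_def)
  have T_powr: "T w n = a n * ((real n - l) * w powr (real n - l))" if "0 < w" for w n
    using that by (simp add: T_def powr_diff powr_realpow powr_minus field_simps)
  have T_le: "T u n \<le> T v n" for n
    unfolding T_powr[OF assms(1)] T_powr[OF v]
    using assms by (intro mult_left_mono mult_powr_mono in_K_nonneg) auto
  have "T u 0 < T v 0"
    unfolding T_powr[OF assms(1)] T_powr[OF v]
    using assms l_pos by (intro mult_strict_left_mono mult_powr_strict_mono in_K_coeff_0_pos) auto
  then have "0 < (\<Sum>n. T v n - T u n)"
    using T_sums[OF v assms(3)] T_u T_le
    by (intro suminf_pos2[where i = 0] summable_diff) (auto simp: sums_iff)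
  also have "\<dots> = v powr (-l) * ((kh_mean a v - l) * ps_eval a v)"
    using T_sums[OF v assms(3)] T_u by (simp add: sums_iff suminf_diff[symmetric])
  finally show ?thesis
    using ps_eval_pos[of v] v assms(3) by (simp add: l_def zero_less_mult_iff)
qed

lemma div_ps_eval_has_derivative:
  assumes "0 < x" "ereal x < conv_radius a"
  shows "((\<lambda>y. y / ps_eval a y) has_real_derivative (1 - kh_mean a x) / ps_eval a x) (at x)"
proof -
  define D where "D = (\<Sum>n. diffs a n * x ^ n)"
  have D: "((\<lambda>x. ps_eval a x) has_real_derivative D) (at x)"
    unfolding D_def using assms by (rule ps_eval_derivative(1))
  have pos: "0 < ps_eval a x" using ps_eval_pos[of x] assms by simp
  have "((\<lambda>y. y / ps_eval a y) has_real_derivative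
          (1 * ps_eval a x - D * x) / (ps_eval a x ^ Suc (Suc 0))) (at x)"
    using pos by (intro DERIV_quotient DERIV_ident D) simp
  moreover have "kh_mean a x = x * D / ps_eval a x"
    using DERIV_imp_deriv[OF D] by (simp add: kh_mean_def)
  then have "(1 * ps_eval a x - D * x) / (ps_eval a x ^ Suc (Suc 0)) = (1 - kh_mean a x) / ps_eval a x"
    using pos by (simp add: field_simps)
  ultimately show ?thesis by simp
qed

lemma div_ps_eval_strict_mono:
  assumes "0 < u" "u < v" "ereal v < conv_radius a"
    and mean_less: "\<And>x. u < x \<Longrightarrow> x < v \<Longrightarrow> kh_mean a x < 1"
  shows "u / ps_eval a u < v / ps_eval a v"
proof -
  have below_v: "ereal x < conv_radius a" if "x \<le> v" for x
    using that by (intro le_less_trans[OF _ assms(3)]) simp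
  show ?thesis
  proof (rule DERIV_pos_imp_increasing_open[OF assms(2)])
    fix x assume x: "u < x" "x < v"
    then show "\<exists>y. ((\<lambda>y. y / ps_eval a y) has_real_derivative y) (at x) \<and> 0 < y"
      using div_ps_eval_has_derivative[of x] mean_less[OF x] ps_eval_pos[of x] assms(1) below_v[of x]
      by auto
  next
    show "continuous_on {u..v} (\<lambda>y. y / ps_eval a y)"
      using assms(1) below_v
      by (intro continuous_at_imp_continuous_on ballI DERIV_isCont[OF div_ps_eval_has_derivative]) auto
  qed
qed

lemma K_star_if_kh_mean_gt_one:
  assumes "0 < w" "ereal w < conv_radius a" "1 < kh_mean a w"
  shows "K_star a"
proof -
  define I where "I = {x. 0 < x \<and> ereal x < conv_radius a}"
  define f where "f x = ereal (kh_mean a x)" for x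
  have f_mono: "f x \<le> f y" if "x \<in> I" "y \<in> I" "x \<le> y" for x y
    using that kh_mean_strict_mono[of x y] by (cases "x = y") (auto simp: I_def f_def)
  have eventually_I: "eventually (\<lambda>y. y \<in> I \<and> x \<le> y) (R_filter a)" if "x \<in> I" for x
    using eventually_R_filter[of x a] that by (auto simp: I_def elim: eventually_mono)
  have "(f \<longlongrightarrow> (SUP x\<in>I. f x)) (R_filter a)"
  proof (rule increasing_tendsto)
    show "eventually (\<lambda>y. f y \<le> (SUP x\<in>I. f x)) (R_filter a)"
      using eventually_I[of w] assms by (auto simp: I_def intro: SUP_upper elim: eventually_mono)
  next
    fix L assume "L < (SUP x\<in>I. f x)"
    then obtain x where x: "x \<in> I" "L < f x" by (auto simp: less_SUP_iff)
    show "eventually (\<lambda>y. L < f y) (R_filter a)"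
      using eventually_I[OF x(1)] by eventually_elim (use x f_mono in \<open>force intro: less_le_trans\<close>)
  qed
  then have "Lim (R_filter a) f = (SUP x\<in>I. f x)"
    by (intro tendsto_Lim R_filter_nontrivial)
  moreover have "f w \<le> (SUP x\<in>I. f x)"
    using assms by (intro SUP_upper) (simp add: I_def)
  moreover have "1 < f w"
    using assms(3) by (simp add: f_def)
  ultimately have "1 < Lim (R_filter a) f"
    by (metis less_le_trans)
  then show ?thesis
    using a_in_K by (simp add: K_star_def f_def[abs_def])
qed

lemma kh_mean_less_one_if_not_K_star:
  assumes "\<not> K_star a" "0 < w" "ereal w < conv_radius a"
  shows "kh_mean a w < 1"
proof (rule ccontr)
  assume "\<not> kh_mean a w < 1"
  obtain v where v: "w < v" "ereal v < conv_radius a"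
    using ereal_dense2[OF assms(3)] by auto
  then have "1 < kh_mean a v"
    using kh_mean_strict_mono[of w v] assms \<open>\<not> kh_mean a w < 1\<close> by simp
  then show False
    using K_star_if_kh_mean_gt_one[of v] v assms by simp
qed

section \<open>The rescaled equation\<close>

lemma lagrange_sol_sum_le_t:
  assumes "0 < t" "ereal t < conv_radius a"
  defines "s \<equiv> t / ps_eval a t"
  shows "summable (\<lambda>n. lagrange_sol a $ n * s ^ n)" "(\<Sum>n. lagrange_sol a $ n * s ^ n) \<le> t"
proof -
  have "0 < ps_eval a t" using ps_eval_pos assms by simp
  then have "0 \<le> s" "s * (\<Sum>k. a k * t ^ k) = t"
    using assms(1) by (simp_all add: s_def ps_eval_real)
  then show "summable (\<lambda>n. lagrange_sol a $ n * s ^ n)" "(\<Sum>n. lagrange_sol a $ n * s ^ n) \<le> t"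
    using lagrange_sol_summable_le[of a s t] in_K_nonneg in_K_coeff_0_pos in_K_summable[of t] assms(1,2)
    by simp_all
qed

lemma lagrange_sol_sum_pos:
  assumes "0 < t" "ereal t < conv_radius a"
  shows "0 < (\<Sum>n. lagrange_sol a $ n * (t / ps_eval a t) ^ n)"
proof (rule suminf_pos2[where i = 1])
  have s: "0 < t / ps_eval a t" using ps_eval_pos assms by simp
  show "summable (\<lambda>n. lagrange_sol a $ n * (t / ps_eval a t) ^ n)"
    using assms by (rule lagrange_sol_sum_le_t(1))
  show "0 \<le> lagrange_sol a $ n * (t / ps_eval a t) ^ n" for n
    using s lagrange_sol_nonneg[of a n] in_K_nonneg in_K_coeff_0_pos by simp
  have "0 < a 0 * (t / ps_eval a t)" using mult_pos_pos[OF in_K_coeff_0_pos s] .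
  then show "0 < lagrange_sol a $ 1 * (t / ps_eval a t) ^ 1"
    using lagrange_sol_nth_Suc[of a 0] in_K_coeff_0_pos by simp
qed

lemma lagrange_sol_sum_eq_t:
  assumes "0 < t" "ereal t < conv_radius a"
    and mean_less: "\<And>x. 0 < x \<Longrightarrow> x < t \<Longrightarrow> kh_mean a x < 1"
  shows "(\<Sum>n. lagrange_sol a $ n * (t / ps_eval a t) ^ n) = t"
proof (rule ccontr)
  define s where "s = t / ps_eval a t"
  define g where "g = (\<Sum>n. lagrange_sol a $ n * s ^ n)"
  assume "(\<Sum>n. lagrange_sol a $ n * (t / ps_eval a t) ^ n) \<noteq> t"
  then have "g < t"
    using lagrange_sol_sum_le_t(2)[OF assms(1,2)] by (simp add: g_def s_def)
  have "0 < g"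
    using lagrange_sol_sum_pos[OF assms(1,2)] by (simp add: g_def s_def)
  have g_R: "ereal g < conv_radius a"
    using \<open>g < t\<close> by (intro le_less_trans[OF _ assms(2)]) simp
  have "0 < ps_eval a t" "0 < ps_eval a g"
    using ps_eval_pos[of t] ps_eval_pos[of g] assms(1,2) \<open>0 < g\<close> g_R by simp_all
  then have "0 \<le> s" using assms(1) by (simp add: s_def)
  then have "g = s * ps_eval a g"
    using lagrange_sol_sum_fixpoint[of a s] lagrange_sol_sum_le_t(1)[OF assms(1,2)] in_K_nonneg
      in_K_coeff_0_pos in_K_summable[of g] \<open>0 < g\<close> g_R by (simp add: g_def s_def ps_eval_real)
  then have "g / ps_eval a g = s"
    using \<open>0 < ps_eval a g\<close> by (metis less_irrefl nonzero_mult_div_cancel_right)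
  moreover have "g / ps_eval a g < s"
    unfolding s_def using \<open>0 < g\<close> \<open>g < t\<close> assms(2) mean_less
    by (intro div_ps_eval_strict_mono) auto
  ultimately show False by simp
qed

lemma lagrange_sol_psi_t_nth:
  assumes "0 < t" "ereal t < conv_radius a"
  shows "lagrange_sol (psi_t a t) $ n = lagrange_sol a $ n * (t / ps_eval a t) ^ n / t"
  using lagrange_sol_scale[of a "ps_eval a t" t n] in_K_coeff_0_pos ps_eval_pos[of t] assms
  unfolding psi_t_def by simp

lemma lagrange_sol_psi_t_pgf:
  assumes "0 < t" "ereal t < conv_radius a"
  defines "B \<equiv> fps_nth (lagrange_sol (psi_t a t))"
  shows "summable B" "\<And>n. 0 \<le> B n" "suminf B \<le> 1" "0 < B 1"
proof -
  define s where "s = t / ps_eval a t"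
  have B: "B = (\<lambda>n. lagrange_sol a $ n * s ^ n / t)"
    using lagrange_sol_psi_t_nth[OF assms(1,2)] by (simp add: B_def s_def fun_eq_iff)
  have s: "0 < s" using ps_eval_pos[of t] assms by (simp add: s_def)
  note sum_le = lagrange_sol_sum_le_t[OF assms(1,2), folded s_def]
  show "summable B" unfolding B by (intro summable_divide sum_le(1))
  show "0 \<le> B n" for n
    unfolding B using s assms(1) lagrange_sol_nonneg[of a n] in_K_nonneg in_K_coeff_0_pos by simp
  show "suminf B \<le> 1"
    unfolding B using sum_le assms(1) by (simp add: suminf_divide[OF sum_le(1)])
  have "0 < a 0 * s / t" using s in_K_coeff_0_pos assms(1) by simp
  then show "0 < B 1"
    unfolding B using lagrange_sol_nth_Suc[of a 0] in_K_coeff_0_pos by simp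
qed

lemma lagrange_sol_psi_t_sums:
  assumes "0 < t" "ereal t < conv_radius a" "norm z \<le> 1"
  shows "(\<lambda>n. of_real (lagrange_sol (psi_t a t) $ n) * z ^ n) sums
           (ps_eval (fps_nth (lagrange_sol a)) (of_real (t / ps_eval a t) * z) / of_real t)"
proof -
  define s where "s = t / ps_eval a t"
  define A where "A n = lagrange_sol a $ n * s ^ n" for n
  have "(\<lambda>n. of_real (A n) * z ^ n) sums ps_eval A z"
    using lagrange_sol_sum_le_t(1)[OF assms(1,2)] lagrange_sol_nonneg[of a] in_K_nonneg in_K_coeff_0_pos
      ps_eval_pos[of t] assms
    by (intro sums_ps_eval_cball) (auto simp: A_def s_def)
  then have "(\<lambda>n. of_real (lagrange_sol a $ n) * (of_real s * z) ^ n) sums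
               ps_eval (fps_nth (lagrange_sol a)) (of_real s * z)"
    by (simp add: A_def ps_eval_def sums_iff power_mult_distrib mult_ac)
  moreover have "of_real (lagrange_sol (psi_t a t) $ n) * z ^ n =
                   of_real (lagrange_sol a $ n) * (of_real s * z) ^ n / of_real t" for n
    using assms by (simp add: lagrange_sol_psi_t_nth s_def power_mult_distrib power_divide)
  ultimately show ?thesis
    using sums_divide by (fastforce simp: s_def)
qed

lemma kh_prob_g_eq_lagrange_sol_psi_t:
  assumes "0 < t" "ereal t < conv_radius a"
    and "\<And>x. 0 < x \<Longrightarrow> x < t \<Longrightarrow> kh_mean a x < 1"
  shows "kh_prob_g (fps_nth (lagrange_sol a)) (t / ps_eval a t) = fps_nth (lagrange_sol (psi_t a t))"
  using lagrange_sol_sum_eq_t[OF assms] ps_eval_pos[of t] assms(1,2)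
  by (simp add: fun_eq_iff kh_prob_g_def lagrange_sol_psi_t_nth ps_eval_real)

lemma lagrange_sol_psi_t_zero: "lagrange_sol (psi_t a 0) = fps_X"
proof -
  have "ps_eval a (0::real) = a 0" by (simp add: ps_eval_real powser_zero)
  then have "Abs_fps (psi_t a 0) = 1"
    using in_K_coeff_0_pos by (simp add: fps_eq_iff psi_t_def)
  moreover have "psi_t a 0 0 \<noteq> 0"
    using \<open>ps_eval a 0 = a 0\<close> in_K_coeff_0_pos by (simp add: psi_t_def)
  ultimately show ?thesis
    by (intro lagrange_sol_unique) simp_all
qed

lemma kh_prob_g_zero_eq_lagrange_sol_psi_t:
  "kh_prob_g (fps_nth (lagrange_sol a)) (0 / ps_eval a 0) = fps_nth (lagrange_sol (psi_t a 0))"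
  by (simp add: fun_eq_iff kh_prob_g_def fps_X_nth lagrange_sol_psi_t_zero)

lemma kh_prob_g_sums_lagrange_sol_psi_t:
  assumes "0 \<le> t" "ereal t < conv_radius a"
    and "\<And>x. 0 < x \<Longrightarrow> x < t \<Longrightarrow> kh_mean a x < 1" and "norm z \<le> 1"
  shows "(\<lambda>n. of_real (kh_prob_g (fps_nth (lagrange_sol a)) (t / ps_eval a t) n) * z ^ n) sums
           ps_eval (fps_nth (lagrange_sol (psi_t a t))) z"
proof (cases "t = 0")
  case True
  have X: "fps_nth (lagrange_sol (psi_t a 0)) = (\<lambda>n. if n = 1 then 1 else 0)"
    by (simp add: lagrange_sol_psi_t_zero fun_eq_iff fps_X_nth)
  have "summable (\<lambda>n. if n = 1 then 1 else 0 :: real)"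
    using sums_single[of 1 "\<lambda>_. 1 :: real"] by (simp add: sums_summable)
  then show ?thesis
    unfolding True kh_prob_g_zero_eq_lagrange_sol_psi_t
    using assms(4) by (intro sums_ps_eval_cball) (simp_all add: X)
next
  case False
  then show ?thesis
    using assms lagrange_sol_psi_t_pgf(1,2)[of t]
      sums_ps_eval_cball[of "fps_nth (lagrange_sol (psi_t a t))" z]
    by (simp add: kh_prob_g_eq_lagrange_sol_psi_t)
qed

end

theorem proposition6p3:
  fixes a :: "nat \<Rightarrow> real"
  assumes "in_K a"
  shows "(\<forall>t. 0 < t \<and> ereal t < conv_radius a \<longrightarrow>
            (\<forall>z::complex. norm z \<le> 1 \<longrightarrow>
               (\<lambda>n. of_real (fps_nth (lagrange_sol (psi_t a t)) n) * z ^ n) sums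
                 (ps_eval (fps_nth (lagrange_sol a)) (of_real (t / ps_eval a t) * z) / of_real t))
          \<and> (\<lambda>z::complex. ps_eval (fps_nth (lagrange_sol (psi_t a t))) z) holomorphic_on ball 0 1
          \<and> continuous_on (cball 0 1) (\<lambda>z::complex. ps_eval (fps_nth (lagrange_sol (psi_t a t))) z)
          \<and> (\<lambda>z::complex. ps_eval (fps_nth (lagrange_sol (psi_t a t))) z) ` ball 0 1 \<subseteq> ball 0 1)
       \<and> (K_star a \<longrightarrow> (\<forall>\<tau>. 0 < \<tau> \<and> ereal \<tau> < conv_radius a \<and> kh_mean a \<tau> = 1 \<longrightarrow>
            (\<forall>t\<in>{0..\<tau>}. \<forall>z::complex. norm z \<le> 1 \<longrightarrow>
               (\<lambda>n. of_real (kh_prob_g (fps_nth (lagrange_sol a)) (t / ps_eval a t) n) * z ^ n) sums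
                 ps_eval (fps_nth (lagrange_sol (psi_t a t))) z)))
       \<and> (\<not> K_star a \<longrightarrow> (\<forall>t. 0 < t \<and> ereal t < conv_radius a \<longrightarrow>
            (\<forall>z::complex. norm z \<le> 1 \<longrightarrow>
               (\<lambda>n. of_real (kh_prob_g (fps_nth (lagrange_sol a)) (t / ps_eval a t) n) * z ^ n) sums
                 ps_eval (fps_nth (lagrange_sol (psi_t a t))) z)))"
proof (intro conjI allI impI ballI, goal_cases)
  case (1 t z)
  then show ?case using lagrange_sol_psi_t_sums[OF assms, of t z] by simp
next
  case (2 t)
  then show ?case by (intro holomorphic_on_ps_eval_ball lagrange_sol_psi_t_pgf[OF assms]) auto
next
  case (3 t)
  then show ?case by (intro continuous_on_ps_eval_cball lagrange_sol_psi_t_pgf[OF assms]) auto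
next
  case (4 t)
  then show ?case by (intro ps_eval_ball_subset[of _ 1] lagrange_sol_psi_t_pgf[OF assms]) auto
next
  case (5 \<tau> t z)
  then have \<tau>: "0 < \<tau>" "ereal \<tau> < conv_radius a" "kh_mean a \<tau> = 1" and t: "0 \<le> t" "t \<le> \<tau>"
    by simp_all
  have "ereal t < conv_radius a"
    using t(2) by (intro le_less_trans[OF _ \<tau>(2)]) simp
  moreover have "kh_mean a x < 1" if "0 < x" "x < t" for x
    using kh_mean_strict_mono[OF assms that(1) _ \<tau>(2)] that t(2) \<tau>(3) by simp
  ultimately show ?case
    using 5(4) by (rule kh_prob_g_sums_lagrange_sol_psi_t[OF assms t(1)])
next
  case (6 t z)
  then have t: "0 < t" "ereal t < conv_radius a" by simp_all
  have "kh_mean a x < 1" if "0 < x" "x < t" for x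
    using that by (intro kh_mean_less_one_if_not_K_star[OF assms 6(1)] less_trans[OF _ t(2)]) simp_all
  then show ?case
    using 6(3) by (rule kh_prob_g_sums_lagrange_sol_psi_t[OF assms less_imp_le[OF t(1)] t(2)])
qed

end
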